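(* Let $\Omega\subset\mathbb{R}^n$ and $v\in L^2_{\mathrm{loc}}(\Omega)$ (possibly vector-valued) be such that $$\int_{B_{mr}}|v|^2\,dx>\int_{B_{Mr}}|v-(v)_{B_{Mr}}|^2\,dx$$ for some concentric balls $B_{mr}\subset B_{Mr}\subset\subset\Omega$, where $0<m<M<\infty$. Then for any $\kappa\in[m,M]$, $$\fint_{B_{\kappa r}}|v|^2\,dx\leq 9\fint_{B_{mr}}|v|^2\,dx.$$
   Context: $(v)_{B}=\fint_B v\,dx=\frac{1}{|B|}\int_B v\,dx$ denotes the integral average; balls $B_{\kappa r}$ are concentric with $B_{mr}$ and $B_{Mr}$. *)

theory Defs
  imports "HOL-Analysis.Analysis"
begin

definition L2_loc :: "'a::euclidean_space set \<Rightarrow> ('a \<Rightarrow> 'b::euclidean_space) \<Rightarrow> bool" where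
  "L2_loc \<Omega> v \<longleftrightarrow> v \<in> borel_measurable (lebesgue_on \<Omega>) \<and>
     (\<forall>K. compact K \<and> K \<subseteq> \<Omega> \<longrightarrow> integrable (lebesgue_on K) (\<lambda>x. (norm (v x))\<^sup>2))"

definition avg :: "'a::euclidean_space set \<Rightarrow> ('a \<Rightarrow> 'b::euclidean_space) \<Rightarrow> 'b" where
  "avg B f = (1 / measure lebesgue B) *\<^sub>R integral\<^sup>L (lebesgue_on B) f"

end

theory Submission
  imports Defs
begin

text \<open>Write \<open>I\<^sub>\<rho>\<close> for the integral of \<open>|v|\<^sup>2\<close> over \<open>B\<^sub>\<rho>\<^sub>r\<close> and \<open>D\<close> for the integral of
  \<open>|v - c|\<^sup>2\<close> over \<open>B\<^sub>M\<^sub>r\<close>, where \<open>c = (v)\<^sub>B\<^sub>M\<^sub>r\<close>; the hypothesis is \<open>D < I\<^sub>m\<close>.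
  Integrating \<open>|c|\<^sup>2 \<le> 2|v|\<^sup>2 + 2|v - c|\<^sup>2\<close> over \<open>B\<^sub>m\<^sub>r\<close> gives \<open>|B\<^sub>m\<^sub>r| |c|\<^sup>2 \<le> 2 I\<^sub>m + 2 D < 4 I\<^sub>m\<close>;
  integrating \<open>|v|\<^sup>2 \<le> 3|v - c|\<^sup>2 + 3/2 |c|\<^sup>2\<close> over \<open>B\<^sub>\<kappa>\<^sub>r\<close> then gives
  \<open>I\<^sub>\<kappa> \<le> 3 D + 3/2 |B\<^sub>\<kappa>\<^sub>r| |c|\<^sup>2 \<le> 3 I\<^sub>m + 6 I\<^sub>m |B\<^sub>\<kappa>\<^sub>r| / |B\<^sub>m\<^sub>r|\<close>, and dividing by
  \<open>|B\<^sub>\<kappa>\<^sub>r| \<ge> |B\<^sub>m\<^sub>r|\<close> yields the factor 9. Neither the choice of \<open>c\<close> as the mean nor the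
  shape of the balls matters: any constant \<open>c\<close> and nested sets of finite measure will do.\<close>

lemma norm_add_sq_le:
  fixes x y :: "'a::real_normed_vector" and t :: real
  assumes "0 < t"
  shows "(norm (x + y))\<^sup>2 \<le> (1 + t) * (norm x)\<^sup>2 + (1 + 1 / t) * (norm y)\<^sup>2"
proof -
  define p q where "p = norm x" and "q = norm y"
  have "0 \<le> (t * p - q)\<^sup>2 / t" using assms by simp
  then have young: "2 * p * q \<le> t * p\<^sup>2 + q\<^sup>2 / t"
    using assms by (simp add: power2_diff power_mult_distrib field_simps power2_eq_square)
  have "(norm (x + y))\<^sup>2 \<le> (p + q)\<^sup>2"
    unfolding p_def q_def by (simp add: norm_triangle_ineq power_mono)
  also have "\<dots> \<le> (1 + t) * p\<^sup>2 + (1 + 1 / t) * q\<^sup>2"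
    using young by (simp add: power2_sum algebra_simps)
  finally show ?thesis unfolding p_def q_def .
qed

lemma integrable_lebesgue_on_subset:
  fixes f :: "'a::euclidean_space \<Rightarrow> 'b::{banach, second_countable_topology}"
  assumes "integrable (lebesgue_on T) f" "S \<subseteq> T" "S \<in> sets lebesgue" "T \<in> sets lebesgue"
  shows "integrable (lebesgue_on S) f"
proof -
  have "integrable lebesgue (\<lambda>x. indicator S x *\<^sub>R (if x \<in> T then f x else 0))"
    using assms(1,3,4)
    by (intro integrable_mult_indicator) (simp_all add: Lebesgue_Measure.integrable_restrict_UNIV)
  also have "(\<lambda>x. indicator S x *\<^sub>R (if x \<in> T then f x else 0)) = (\<lambda>x. if x \<in> S then f x else 0)"
    using assms(2) by (force simp: indicator_def)
  finally show ?thesis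
    using assms(3) by (simp add: Lebesgue_Measure.integrable_restrict_UNIV)
qed

context finite_measure
begin

lemma integrable_norm_diff_sq:
  fixes v :: "'a \<Rightarrow> 'b::euclidean_space"
  assumes "v \<in> borel_measurable M" "integrable M (\<lambda>x. (norm (v x))\<^sup>2)"
  shows "integrable M (\<lambda>x. (norm (v x - c))\<^sup>2)"
proof (rule Bochner_Integration.integrable_bound)
  show "integrable M (\<lambda>x. 2 * (norm (v x))\<^sup>2 + 2 * (norm c)\<^sup>2)"
    using assms(2) by simp
  show "(\<lambda>x. (norm (v x - c))\<^sup>2) \<in> borel_measurable M"
    using assms(1) by measurable
  show "AE x in M. norm ((norm (v x - c))\<^sup>2) \<le> norm (2 * (norm (v x))\<^sup>2 + 2 * (norm c)\<^sup>2)"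
    using norm_add_sq_le[of 1 "v _" "- c"] by simp
qed

lemma measure_mult_norm_sq_le:
  fixes v :: "'a \<Rightarrow> 'b::euclidean_space"
  assumes "v \<in> borel_measurable M" "integrable M (\<lambda>x. (norm (v x))\<^sup>2)"
  shows "measure M (space M) * (norm c)\<^sup>2
    \<le> 2 * (\<integral>x. (norm (v x))\<^sup>2 \<partial>M) + 2 * (\<integral>x. (norm (v x - c))\<^sup>2 \<partial>M)"
proof -
  have diff: "integrable M (\<lambda>x. (norm (v x - c))\<^sup>2)"
    using assms by (rule integrable_norm_diff_sq)
  have "(norm c)\<^sup>2 \<le> 2 * (norm (v x))\<^sup>2 + 2 * (norm (v x - c))\<^sup>2" for x
    using norm_add_sq_le[of 1 "v x" "c - v x"] by (simp add: norm_minus_commute)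
  then have "(\<integral>x. (norm c)\<^sup>2 \<partial>M) \<le> (\<integral>x. 2 * (norm (v x))\<^sup>2 + 2 * (norm (v x - c))\<^sup>2 \<partial>M)"
    using assms(2) diff by (intro integral_mono) auto
  then show ?thesis
    using assms(2) diff by simp
qed

lemma integral_norm_sq_le_shift:
  fixes v :: "'a \<Rightarrow> 'b::euclidean_space"
  assumes "v \<in> borel_measurable M" "integrable M (\<lambda>x. (norm (v x))\<^sup>2)"
  shows "(\<integral>x. (norm (v x))\<^sup>2 \<partial>M)
    \<le> 3 * (\<integral>x. (norm (v x - c))\<^sup>2 \<partial>M) + 3 / 2 * measure M (space M) * (norm c)\<^sup>2"
proof -
  have diff: "integrable M (\<lambda>x. (norm (v x - c))\<^sup>2)"
    using assms by (rule integrable_norm_diff_sq)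
  have "(norm (v x))\<^sup>2 \<le> 3 * (norm (v x - c))\<^sup>2 + 3 / 2 * (norm c)\<^sup>2" for x
    using norm_add_sq_le[of 2 "v x - c" c] by simp
  then have "(\<integral>x. (norm (v x))\<^sup>2 \<partial>M) \<le> (\<integral>x. 3 * (norm (v x - c))\<^sup>2 + 3 / 2 * (norm c)\<^sup>2 \<partial>M)"
    using assms(2) diff by (intro integral_mono) auto
  then show ?thesis
    using assms(2) diff by simp
qed

end

lemma avg_norm_sq_le_nine_avg:
  fixes v :: "'a::euclidean_space \<Rightarrow> 'b::euclidean_space"
  assumes "S \<subseteq> T" "T \<subseteq> U"
    and S: "S \<in> sets lebesgue" and T: "T \<in> sets lebesgue" and U: "U \<in> lmeasurable"
    and S_pos: "0 < measure lebesgue S"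
    and v: "v \<in> borel_measurable (lebesgue_on U)" "integrable (lebesgue_on U) (\<lambda>x. (norm (v x))\<^sup>2)"
    and small: "integral\<^sup>L (lebesgue_on U) (\<lambda>x. (norm (v x - c))\<^sup>2)
      < integral\<^sup>L (lebesgue_on S) (\<lambda>x. (norm (v x))\<^sup>2)"
  shows "avg T (\<lambda>x. (norm (v x))\<^sup>2) \<le> 9 * avg S (\<lambda>x. (norm (v x))\<^sup>2)"
proof -
  define I where "I W = integral\<^sup>L (lebesgue_on W) (\<lambda>x. (norm (v x))\<^sup>2)" for W
  define D where "D W = integral\<^sup>L (lebesgue_on W) (\<lambda>x. (norm (v x - c))\<^sup>2)" for W
  define \<mu> where "\<mu> W = measure lebesgue W" for W :: "'a set"
  have U_sets: "U \<in> sets lebesgue"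
    using U by auto
  have lmeas: "W \<in> lmeasurable" if "W \<subseteq> U" "W \<in> sets lebesgue" for W
    using U that by (rule fmeasurableI2)
  have fin: "finite_measure (lebesgue_on W)" if "W \<subseteq> U" "W \<in> sets lebesgue" for W
    using lmeas[OF that] by (rule finite_measure_lebesgue_on)
  have meas: "v \<in> borel_measurable (lebesgue_on W)" if "W \<subseteq> U" for W
    using v(1) that by (rule measurable_restrict_mono)
  have int: "integrable (lebesgue_on W) (\<lambda>x. (norm (v x))\<^sup>2)"
    if "W \<subseteq> U" "W \<in> sets lebesgue" for W
    using v(2) that U_sets by (rule integrable_lebesgue_on_subset)
  have measure_on: "measure (lebesgue_on W) W = \<mu> W"
    if "W \<in> sets lebesgue" for W
    using that by (simp add: \<mu>_def measure_restrict_space)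
  have D_mono: "D W \<le> D U" if "W \<subseteq> U" "W \<in> sets lebesgue" for W
    unfolding D_def
    using that U_sets finite_measure.integrable_norm_diff_sq[OF fin[OF order_refl U_sets] v]
    by (intro integral_mono_lebesgue_on_AE) auto
  have sub_U: "S \<subseteq> U" "T \<subseteq> U"
    using assms(1,2) by auto
  have mean_bound: "\<mu> S * (norm c)\<^sup>2 \<le> 2 * I S + 2 * D S"
    using finite_measure.measure_mult_norm_sq_le[OF fin meas int, of S c] sub_U S
    by (simp add: I_def D_def measure_on)
  have IT: "I T \<le> 3 * D T + 3 / 2 * \<mu> T * (norm c)\<^sup>2"
    using finite_measure.integral_norm_sq_le_shift[OF fin meas int, of T c] sub_U T
    by (simp add: I_def D_def measure_on)
  have D_less: "D U < I S"
    using small by (simp add: I_def D_def)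
  have \<mu>_ST: "0 < \<mu> S" "\<mu> S \<le> \<mu> T"
    using S_pos measure_mono_fmeasurable[OF assms(1) S lmeas[OF sub_U(2) T]]
    by (simp_all add: \<mu>_def)
  have "(norm c)\<^sup>2 \<le> 4 * I S / \<mu> S"
    using mean_bound D_mono[OF sub_U(1) S] D_less \<mu>_ST by (simp add: field_simps)
  then have "I T \<le> 3 * I S + 6 * I S / \<mu> S * \<mu> T"
    using IT D_mono[OF sub_U(2) T] D_less \<mu>_ST mult_left_mono[of _ _ "3 / 2 * \<mu> T"] by fastforce
  then have "I T / \<mu> T \<le> 3 * I S / \<mu> T + 6 * I S / \<mu> S"
    using \<mu>_ST by (simp add: field_simps)
  also have "3 * I S / \<mu> T \<le> 3 * I S / \<mu> S"
    using \<mu>_ST by (intro divide_left_mono) (auto simp: I_def intro!: integral_nonneg_AE)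
  finally show ?thesis
    by (simp add: avg_def I_def \<mu>_def)
qed

theorem lemma4p2:
  fixes \<Omega> :: "'a::euclidean_space set" and v :: "'a \<Rightarrow> 'b::euclidean_space"
    and x0 :: 'a and r m M \<kappa> :: real
  assumes "L2_loc \<Omega> v"
    and "0 < r" and "0 < m" and "m < M"
    and "cball x0 (M * r) \<subseteq> \<Omega>"
    and "integral\<^sup>L (lebesgue_on (ball x0 (m * r))) (\<lambda>x. (norm (v x))\<^sup>2)
         > integral\<^sup>L (lebesgue_on (ball x0 (M * r)))
             (\<lambda>x. (norm (v x - avg (ball x0 (M * r)) v))\<^sup>2)"
    and "m \<le> \<kappa>" and "\<kappa> \<le> M"
  shows "avg (ball x0 (\<kappa> * r)) (\<lambda>x. (norm (v x))\<^sup>2)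
         \<le> 9 * avg (ball x0 (m * r)) (\<lambda>x. (norm (v x))\<^sup>2)"
proof (rule avg_norm_sq_le_nine_avg[where c = "avg (ball x0 (M * r)) v"])
  let ?U = "ball x0 (M * r)"
  have U_cball: "?U \<subseteq> cball x0 (M * r)"
    by (rule ball_subset_cball)
  show "ball x0 (m * r) \<subseteq> ball x0 (\<kappa> * r)" "ball x0 (\<kappa> * r) \<subseteq> ?U"
    using assms(2,7,8) by (simp_all add: subset_ball)
  show "0 < measure lebesgue (ball x0 (m * r))"
    using assms(2,3) by (simp add: measure_completion)
  show "v \<in> borel_measurable (lebesgue_on ?U)"
    using assms(1,5) U_cball unfolding L2_loc_def by (blast intro: measurable_restrict_mono)
  show "integrable (lebesgue_on ?U) (\<lambda>x. (norm (v x))\<^sup>2)"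
  proof (rule integrable_lebesgue_on_subset)
    show "integrable (lebesgue_on (cball x0 (M * r))) (\<lambda>x. (norm (v x))\<^sup>2)"
      using assms(1,5) compact_cball unfolding L2_loc_def by blast
  qed (simp_all add: U_cball)
  show "ball x0 (m * r) \<in> sets lebesgue" "ball x0 (\<kappa> * r) \<in> sets lebesgue" "?U \<in> lmeasurable"
    by simp_all
qed (fact assms(6))

end
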